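(* The Drury-Arveson shift $DA=(T_1,T_2)$ is not semi-hyponormal.
   Context: $DA$ is the 2-variable weighted shift on $\ell^2(\mathbb{Z}_+^2)$ (orthonormal basis $\{e_{\mathbf{k}}\}$) given by $T_1e_{(k_1,k_2)}=\sqrt{\frac{k_1+1}{k_1+k_2+1}}\,e_{(k_1+1,k_2)}$ and $T_2e_{(k_1,k_2)}=\sqrt{\frac{k_2+1}{k_1+k_2+1}}\,e_{(k_1,k_2+1)}$. For a commuting pair $(T_1,T_2)$ let $L=\begin{pmatrix} T_1^*T_1 & T_2^*T_1\\ T_1^*T_2 & T_2^*T_2\end{pmatrix}$ and $R=\begin{pmatrix} T_1T_1^* & T_1T_2^*\\ T_2T_1^* & T_2T_2^*\end{pmatrix}$ acting on $\mathcal{H}\oplus\mathcal{H}$; the pair is semi-hyponormal if $L\ge0$ and $\sqrt{L}\ge\sqrt{R}$ (positive square roots). *)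

theory Defs
  imports "HOL-Analysis.Analysis"
begin

type_synonym vec = "nat \<times> nat \<Rightarrow> complex"

definition l2 :: "vec set" where
  "l2 = {x. (\<lambda>k. (cmod (x k))\<^sup>2) summable_on UNIV}"

definition l2_inner :: "vec \<Rightarrow> vec \<Rightarrow> complex" where
  "l2_inner x y = (\<Sum>\<^sub>\<infinity>k. x k * cnj (y k))"

definition adj :: "(vec \<Rightarrow> vec) \<Rightarrow> (vec \<Rightarrow> vec)" where
  "adj A = (\<lambda>y. if y \<in> l2 then (THE z. z \<in> l2 \<and> (\<forall>x\<in>l2. l2_inner (A x) y = l2_inner x z))
                 else (\<lambda>_. 0))"

definition H2 :: "(vec \<times> vec) set" where
  "H2 = l2 \<times> l2"

definition H2_inner :: "vec \<times> vec \<Rightarrow> vec \<times> vec \<Rightarrow> complex" where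
  "H2_inner u v = l2_inner (fst u) (fst v) + l2_inner (snd u) (snd v)"

definition H2_norm :: "vec \<times> vec \<Rightarrow> real" where
  "H2_norm u = sqrt (Re (H2_inner u u))"

definition op_matrix ::
  "(vec \<Rightarrow> vec) \<Rightarrow> (vec \<Rightarrow> vec) \<Rightarrow> (vec \<Rightarrow> vec) \<Rightarrow> (vec \<Rightarrow> vec) \<Rightarrow> (vec \<times> vec \<Rightarrow> vec \<times> vec)" where
  "op_matrix A B C D = (\<lambda>(x, y). (\<lambda>k. A x k + B y k, \<lambda>k. C x k + D y k))"

definition pos_op2 :: "(vec \<times> vec \<Rightarrow> vec \<times> vec) \<Rightarrow> bool" where
  "pos_op2 P \<longleftrightarrow> (\<forall>u\<in>H2. Im (H2_inner (P u) u) = 0 \<and> Re (H2_inner (P u) u) \<ge> 0)"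

definition add2 :: "vec \<times> vec \<Rightarrow> vec \<times> vec \<Rightarrow> vec \<times> vec" where
  "add2 u v = (\<lambda>k. fst u k + fst v k, \<lambda>k. snd u k + snd v k)"

definition scale2 :: "complex \<Rightarrow> vec \<times> vec \<Rightarrow> vec \<times> vec" where
  "scale2 c u = (\<lambda>k. c * fst u k, \<lambda>k. c * snd u k)"

definition diff2 :: "(vec \<times> vec \<Rightarrow> vec \<times> vec) \<Rightarrow> (vec \<times> vec \<Rightarrow> vec \<times> vec) \<Rightarrow> (vec \<times> vec \<Rightarrow> vec \<times> vec)" where
  "diff2 S T = (\<lambda>u. (\<lambda>k. fst (S u) k - fst (T u) k, \<lambda>k. snd (S u) k - snd (T u) k))"

definition bounded_op2 :: "(vec \<times> vec \<Rightarrow> vec \<times> vec) \<Rightarrow> bool" where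
  "bounded_op2 S \<longleftrightarrow>
     (\<forall>u\<in>H2. S u \<in> H2) \<and>
     (\<forall>u\<in>H2. \<forall>v\<in>H2. S (add2 u v) = add2 (S u) (S v)) \<and>
     (\<forall>c. \<forall>u\<in>H2. S (scale2 c u) = scale2 c (S u)) \<and>
     (\<exists>C. \<forall>u\<in>H2. H2_norm (S u) \<le> C * H2_norm u)"

definition op_sqrt :: "(vec \<times> vec \<Rightarrow> vec \<times> vec) \<Rightarrow> (vec \<times> vec \<Rightarrow> vec \<times> vec)" where
  "op_sqrt P = (THE S. bounded_op2 S \<and> pos_op2 S \<and> (\<forall>u. u \<notin> H2 \<longrightarrow> S u = ((\<lambda>_. 0), (\<lambda>_. 0)))
                      \<and> (\<forall>u\<in>H2. S (S u) = P u))"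

definition L_op :: "(vec \<Rightarrow> vec) \<Rightarrow> (vec \<Rightarrow> vec) \<Rightarrow> (vec \<times> vec \<Rightarrow> vec \<times> vec)" where
  "L_op T1 T2 = op_matrix (adj T1 \<circ> T1) (adj T2 \<circ> T1) (adj T1 \<circ> T2) (adj T2 \<circ> T2)"

definition R_op :: "(vec \<Rightarrow> vec) \<Rightarrow> (vec \<Rightarrow> vec) \<Rightarrow> (vec \<times> vec \<Rightarrow> vec \<times> vec)" where
  "R_op T1 T2 = op_matrix (T1 \<circ> adj T1) (T1 \<circ> adj T2) (T2 \<circ> adj T1) (T2 \<circ> adj T2)"

definition semi_hyponormal :: "(vec \<Rightarrow> vec) \<Rightarrow> (vec \<Rightarrow> vec) \<Rightarrow> bool" where
  "semi_hyponormal T1 T2 \<longleftrightarrow>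
     pos_op2 (L_op T1 T2) \<and>
     pos_op2 (diff2 (op_sqrt (L_op T1 T2)) (op_sqrt (R_op T1 T2)))"

text \<open>The Drury-Arveson shift: T1 e_(k1,k2) = sqrt((k1+1)/(k1+k2+1)) e_(k1+1,k2), similarly T2.\<close>
definition DA1 :: "vec \<Rightarrow> vec" where
  "DA1 x = (\<lambda>(j1, j2). if j1 = 0 then 0
              else complex_of_real (sqrt (real j1 / real (j1 + j2))) * x (j1 - 1, j2))"

definition DA2 :: "vec \<Rightarrow> vec" where
  "DA2 x = (\<lambda>(j1, j2). if j2 = 0 then 0
              else complex_of_real (sqrt (real j2 / real (j1 + j2))) * x (j1, j2 - 1))"

end

theory Submission
  imports Defs
begin

text \<open>
  Split \<open>H \<oplus> H\<close> into the two-dimensional blocks spanned by \<open>(e\<^bsub>\<beta>-e\<^sub>2\<^esub>, 0)\<close> and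
  \<open>(0, e\<^bsub>\<beta>-e\<^sub>1\<^esub>)\<close>. Both \<open>L\<close> and \<open>R\<close> act block-diagonally, by real positive semidefinite
  \<open>2 \<times> 2\<close> matrices. A positive square root \<open>S\<close> of an operator \<open>P\<close> is determined on every vector
  \<open>v\<close> with \<open>P\<^sup>2 v = t P v - \<delta> v\<close> (\<open>t, \<delta> \<ge> 0\<close>): writing
  \<open>x\<^sup>4 - t x\<^sup>2 + \<delta> = (x\<^sup>2 + \<tau> x + \<surd>\<delta>) (x\<^sup>2 - \<tau> x + \<surd>\<delta>)\<close> with \<open>\<tau>\<^sup>2 = t + 2 \<surd>\<delta>\<close>,
  positivity of \<open>S\<^sup>2 + \<tau> S + \<surd>\<delta>\<close> forces \<open>\<tau> S v = P v + \<surd>\<delta> v\<close>. Applied to the basis vectors,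
  this shows that \<open>\<surd>L\<close> and \<open>\<surd>R\<close> are the blockwise matrix square roots. In the block
  \<open>\<beta> = (1, 1)\<close> one has \<open>L = [[1, 1/2], [1/2, 1]]\<close> and \<open>R = [[1, 1], [1, 1]]\<close>, and testing
  \<open>\<surd>L - \<surd>R\<close> against the vector \<open>(1, 1)\<close> of this block gives \<open>\<surd>6 - \<surd>8 < 0\<close>.
\<close>

section \<open>The spaces \<open>\<ell>\<^sup>2\<close> and \<open>H \<oplus> H\<close>\<close>

type_synonym op2 = "vec \<times> vec \<Rightarrow> vec \<times> vec"

definition unit_vec :: "nat \<times> nat \<Rightarrow> vec" where
  "unit_vec j = (\<lambda>k. if k = j then 1 else 0)"

lemma l2_prod_summable:
  assumes "x \<in> l2" "y \<in> l2"
  shows "(\<lambda>k. x k * cnj (y k)) summable_on UNIV"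
proof -
  have "(\<lambda>k. (cmod (x k))\<^sup>2 + (cmod (y k))\<^sup>2) summable_on UNIV"
    using assms by (intro summable_on_add) (auto simp: l2_def)
  then have "(\<lambda>k. norm (x k * cnj (y k))) summable_on UNIV"
  proof (rule summable_on_comparison_test)
    fix k
    have "norm (x k * cnj (y k)) = cmod (x k) * cmod (y k)"
      by (simp add: norm_mult)
    also have "\<dots> \<le> (cmod (x k))\<^sup>2 + (cmod (y k))\<^sup>2"
      using sum_squares_bound[of "cmod (x k)" "cmod (y k)"]
        mult_nonneg_nonneg[OF norm_ge_zero norm_ge_zero, of "x k" "y k"]
      by linarith
    finally show "norm (x k * cnj (y k)) \<le> (cmod (x k))\<^sup>2 + (cmod (y k))\<^sup>2" .
  qed simp
  then show ?thesis by (rule abs_summable_summable)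
qed

lemma l2_lincomb:
  assumes "x \<in> l2" "y \<in> l2"
  shows "(\<lambda>k. a * x k + b * y k) \<in> l2"
proof -
  have s: "(\<lambda>k. 2 * (cmod a)\<^sup>2 * (cmod (x k))\<^sup>2 + 2 * (cmod b)\<^sup>2 * (cmod (y k))\<^sup>2) summable_on UNIV"
    using assms by (intro summable_on_add summable_on_cmult_right) (auto simp: l2_def)
  show ?thesis unfolding l2_def mem_Collect_eq
  proof (rule summable_on_comparison_test[OF s])
    fix k
    have "cmod (a * x k + b * y k) \<le> cmod a * cmod (x k) + cmod b * cmod (y k)"
      by (metis norm_mult norm_triangle_ineq)
    then have "(cmod (a * x k + b * y k))\<^sup>2 \<le> (cmod a * cmod (x k) + cmod b * cmod (y k))\<^sup>2"
      by (simp add: power_mono)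
    also have "\<dots> \<le> 2 * (cmod a)\<^sup>2 * (cmod (x k))\<^sup>2 + 2 * (cmod b)\<^sup>2 * (cmod (y k))\<^sup>2"
      using sum_squares_bound[of "cmod a * cmod (x k)" "cmod b * cmod (y k)"]
      by (simp add: power2_sum power_mult_distrib mult.assoc)
    finally show "(cmod (a * x k + b * y k))\<^sup>2
        \<le> 2 * (cmod a)\<^sup>2 * (cmod (x k))\<^sup>2 + 2 * (cmod b)\<^sup>2 * (cmod (y k))\<^sup>2" .
  qed simp
qed

lemma unit_vec_l2: "unit_vec j \<in> l2"
proof -
  have "(\<lambda>k. (cmod (unit_vec j k))\<^sup>2) summable_on UNIV \<longleftrightarrow>
      (\<lambda>k. (cmod (unit_vec j k))\<^sup>2) summable_on {j}"
    by (rule summable_on_cong_neutral) (auto simp: unit_vec_def)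
  then show ?thesis by (simp add: l2_def)
qed

lemma l2_inner_unit_vec [simp]: "l2_inner x (unit_vec j) = x j"
proof -
  have "l2_inner x (unit_vec j) = (\<Sum>\<^sub>\<infinity>k\<in>{j}. x k * cnj (unit_vec j k))"
    unfolding l2_inner_def by (rule infsum_cong_neutral) (auto simp: unit_vec_def)
  then show ?thesis by (simp add: unit_vec_def)
qed

lemma l2_zero [simp]: "(\<lambda>_. 0) \<in> l2"
  by (simp add: l2_def)

lemma l2_inner_zero_right [simp]: "l2_inner x (\<lambda>_. 0) = 0"
  by (simp add: l2_inner_def)

lemma l2_inner_add_left:
  "x \<in> l2 \<Longrightarrow> y \<in> l2 \<Longrightarrow> z \<in> l2 \<Longrightarrow> l2_inner (\<lambda>k. x k + y k) z = l2_inner x z + l2_inner y z"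
  unfolding l2_inner_def by (simp add: distrib_right infsum_add l2_prod_summable)

lemma l2_inner_scale_left: "l2_inner (\<lambda>k. c * x k) z = c * l2_inner x z"
  unfolding l2_inner_def by (simp add: mult.assoc infsum_cmult_right')

lemma l2_inner_commute: "l2_inner x y = cnj (l2_inner y x)"
  unfolding l2_inner_def by (subst infsum_cnj[symmetric]) (simp add: mult.commute)

lemma l2_inner_self:
  assumes "x \<in> l2"
  shows "l2_inner x x = of_real (\<Sum>\<^sub>\<infinity>k. (cmod (x k))\<^sup>2)"
proof -
  have "((\<lambda>k. (cmod (x k))\<^sup>2) has_sum (\<Sum>\<^sub>\<infinity>k. (cmod (x k))\<^sup>2)) UNIV"
    using assms by (simp add: l2_def)
  from has_sum_of_real[OF this] show ?thesis
    unfolding l2_inner_def complex_norm_square[symmetric] by (rule infsumI)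
qed

lemma l2_inner_self_eq_0D:
  assumes "x \<in> l2" "Re (l2_inner x x) \<le> 0"
  shows "x = (\<lambda>_. 0)"
proof
  fix k
  have "(cmod (x k))\<^sup>2 = 0"
    by (rule nonneg_infsum_le_0D[of "\<lambda>k. (cmod (x k))\<^sup>2" UNIV])
       (use assms in \<open>auto simp: l2_inner_self l2_def\<close>)
  then show "x k = 0" by simp
qed

lemma l2_weighted:
  assumes "x \<in> l2" "\<And>k. \<bar>w k\<bar> \<le> 1"
  shows "(\<lambda>k. of_real (w k) * x k) \<in> l2"
  unfolding l2_def mem_Collect_eq
proof (rule summable_on_comparison_test)
  show "(\<lambda>k. (cmod (x k))\<^sup>2) summable_on UNIV" using assms(1) by (simp add: l2_def)
  show "(cmod (of_real (w k) * x k))\<^sup>2 \<le> (cmod (x k))\<^sup>2" for k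
    using assms(2)[of k]
    by (simp add: norm_mult power_mult_distrib mult_left_le_one_le abs_square_le_1)
qed simp

lemma adj_eqI:
  assumes "y \<in> l2" "z \<in> l2" "\<And>x. x \<in> l2 \<Longrightarrow> l2_inner (A x) y = l2_inner x z"
  shows "adj A y = z"
proof -
  have "(THE z. z \<in> l2 \<and> (\<forall>x\<in>l2. l2_inner (A x) y = l2_inner x z)) = z"
  proof (rule the_equality)
    fix z' assume z': "z' \<in> l2 \<and> (\<forall>x\<in>l2. l2_inner (A x) y = l2_inner x z')"
    show "z' = z"
    proof
      fix j
      have "l2_inner (unit_vec j) z' = l2_inner (unit_vec j) z"
        using z' assms(3) unit_vec_l2 by metis
      then show "z' j = z j"
        by (simp add: l2_inner_commute[of "unit_vec j"])
    qed
  qed (use assms in blast)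
  with assms(1) show ?thesis by (simp add: adj_def)
qed

abbreviation zero2 :: "vec \<times> vec" where
  "zero2 \<equiv> (\<lambda>_. 0, \<lambda>_. 0)"

lemma H2_iff: "u \<in> H2 \<longleftrightarrow> fst u \<in> l2 \<and> snd u \<in> l2"
  by (cases u) (simp add: H2_def)

lemma add2_H2: "u \<in> H2 \<Longrightarrow> v \<in> H2 \<Longrightarrow> add2 u v \<in> H2"
  using l2_lincomb[of _ _ 1 1] by (simp add: H2_iff add2_def)

lemma scale2_H2: "u \<in> H2 \<Longrightarrow> scale2 c u \<in> H2"
  using l2_lincomb[of "fst u" "fst u" c 0] l2_lincomb[of "snd u" "snd u" c 0]
  by (simp add: H2_iff scale2_def)

lemma H2_inner_add_left:
  "u \<in> H2 \<Longrightarrow> v \<in> H2 \<Longrightarrow> w \<in> H2 \<Longrightarrow> H2_inner (add2 u v) w = H2_inner u w + H2_inner v w"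
  by (simp add: H2_iff H2_inner_def add2_def l2_inner_add_left)

lemma H2_inner_scale_left: "H2_inner (scale2 c u) w = c * H2_inner u w"
  by (simp add: H2_inner_def scale2_def l2_inner_scale_left distrib_left)

lemma H2_inner_commute: "H2_inner u v = cnj (H2_inner v u)"
  by (simp add: H2_inner_def l2_inner_commute[of "fst u"] l2_inner_commute[of "snd u"])

lemma H2_inner_add_right:
  "u \<in> H2 \<Longrightarrow> v \<in> H2 \<Longrightarrow> w \<in> H2 \<Longrightarrow> H2_inner w (add2 u v) = H2_inner w u + H2_inner w v"
  by (subst H2_inner_commute)
     (simp add: H2_inner_add_left H2_inner_commute[of u w] H2_inner_commute[of v w])

lemma H2_inner_scale_right: "H2_inner w (scale2 c u) = cnj c * H2_inner w u"
  by (subst H2_inner_commute) (simp add: H2_inner_scale_left H2_inner_commute[of u w])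

lemma H2_inner_zero_left [simp]: "H2_inner zero2 w = 0"
  by (simp add: H2_inner_def l2_inner_def)

lemma H2_inner_self_nonneg: "u \<in> H2 \<Longrightarrow> 0 \<le> Re (H2_inner u u)"
  by (simp add: H2_iff H2_inner_def l2_inner_self infsum_nonneg)

lemma H2_inner_self_eq_0D:
  assumes "u \<in> H2" "Re (H2_inner u u) \<le> 0"
  shows "u = zero2"
proof -
  have "0 \<le> Re (l2_inner (fst u) (fst u))" "0 \<le> Re (l2_inner (snd u) (snd u))"
    using assms(1) by (simp_all add: H2_iff l2_inner_self infsum_nonneg)
  with assms have "fst u = (\<lambda>_. 0)" "snd u = (\<lambda>_. 0)"
    by (auto simp: H2_iff H2_inner_def intro!: l2_inner_self_eq_0D)
  then show ?thesis by (simp add: prod_eq_iff)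
qed

definition unit1 :: "nat \<times> nat \<Rightarrow> vec \<times> vec" where
  "unit1 k = (unit_vec k, \<lambda>_. 0)"

definition unit2 :: "nat \<times> nat \<Rightarrow> vec \<times> vec" where
  "unit2 k = (\<lambda>_. 0, unit_vec k)"

lemma unit1_H2: "unit1 k \<in> H2" and unit2_H2: "unit2 k \<in> H2"
  by (simp_all add: unit1_def unit2_def H2_iff unit_vec_l2)

lemma H2_inner_unit1 [simp]: "H2_inner w (unit1 k) = fst w k"
  and H2_inner_unit2 [simp]: "H2_inner w (unit2 k) = snd w k"
  by (simp_all add: unit1_def unit2_def H2_inner_def)

section \<open>Positive square roots on \<open>H \<oplus> H\<close>\<close>

definition linear_op2 :: "op2 \<Rightarrow> bool" where
  "linear_op2 S \<longleftrightarrow> (\<forall>u\<in>H2. S u \<in> H2) \<and>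
     (\<forall>u\<in>H2. \<forall>v\<in>H2. S (add2 u v) = add2 (S u) (S v)) \<and>
     (\<forall>c. \<forall>u\<in>H2. S (scale2 c u) = scale2 c (S u))"

lemma bounded_op2_imp_linear_op2: "bounded_op2 S \<Longrightarrow> linear_op2 S"
  by (simp add: bounded_op2_def linear_op2_def)

lemma linear_op2_H2: "linear_op2 S \<Longrightarrow> u \<in> H2 \<Longrightarrow> S u \<in> H2"
  and linear_op2_add: "linear_op2 S \<Longrightarrow> u \<in> H2 \<Longrightarrow> v \<in> H2 \<Longrightarrow> S (add2 u v) = add2 (S u) (S v)"
  and linear_op2_scale: "linear_op2 S \<Longrightarrow> u \<in> H2 \<Longrightarrow> S (scale2 c u) = scale2 c (S u)"
  by (simp_all add: linear_op2_def)

lemma pos_op2_selfadjoint: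
  assumes lin: "linear_op2 S" and pos: "pos_op2 S" and u: "u \<in> H2" and v: "v \<in> H2"
  shows "H2_inner (S u) v = H2_inner u (S v)"
proof -
  define a where "a = H2_inner (S u) v"
  define b where "b = H2_inner (S v) u"
  have Su: "S u \<in> H2" and Sv: "S v \<in> H2" and iv: "scale2 \<i> v \<in> H2"
    using lin u v by (simp_all add: linear_op2_H2 scale2_H2)
  have im: "Im (H2_inner (S w) w) = 0" if "w \<in> H2" for w
    using pos that by (simp add: pos_op2_def)
  have "H2_inner (S (add2 u v)) (add2 u v) = H2_inner (S u) u + a + b + H2_inner (S v) v"
    using u v Su Sv
    by (simp add: a_def b_def linear_op2_add[OF lin] H2_inner_add_left H2_inner_add_right add2_H2)
  with im[OF add2_H2[OF u v]] im[OF u] im[OF v] have "Im a + Im b = 0"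
    by simp
  moreover
  have "H2_inner (S (add2 u (scale2 \<i> v))) (add2 u (scale2 \<i> v))
      = H2_inner (S u) u - \<i> * a + \<i> * b + H2_inner (S v) v"
    using u v Su Sv iv scale2_H2[OF Sv]
    by (simp add: a_def b_def linear_op2_add[OF lin] linear_op2_scale[OF lin] H2_inner_add_left
        H2_inner_add_right add2_H2 H2_inner_scale_left H2_inner_scale_right algebra_simps)
  with im[OF add2_H2[OF u iv]] im[OF u] im[OF v] have "Re b - Re a = 0"
    by simp
  ultimately have "b = cnj a"
    by (simp add: complex_eq_iff)
  then show ?thesis by (simp add: a_def b_def H2_inner_commute[of u "S v"])
qed

lemma linear_op2_lincomb:
  "linear_op2 S \<Longrightarrow> u \<in> H2 \<Longrightarrow> w \<in> H2 \<Longrightarrow> S (add2 u (scale2 c w)) = add2 (S u) (scale2 c (S w))"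
  by (simp add: linear_op2_add linear_op2_scale scale2_H2)

lemma pos_op2_sq_eq_zero:
  assumes lin: "linear_op2 S" and pos: "pos_op2 S" and y: "y \<in> H2" and "S (S y) = zero2"
  shows "S y = zero2"
proof -
  have Sy: "S y \<in> H2" using lin y by (rule linear_op2_H2)
  have "H2_inner (S y) (S y) = H2_inner (S (S y)) y"
    using pos_op2_selfadjoint[OF lin pos Sy y] by simp
  also have "\<dots> = 0" using assms(4) by simp
  finally show ?thesis using H2_inner_self_eq_0D[OF Sy] by simp
qed

lemma pos_op2_quadratic_kernel:
  fixes \<tau> d :: real
  assumes lin: "linear_op2 S" and pos: "pos_op2 S" and z: "z \<in> H2" and "\<tau> \<ge> 0" "d \<ge> 0"
    and eq: "add2 (add2 (S (S z)) (scale2 (of_real \<tau>) (S z))) (scale2 (of_real d) z) = zero2"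
  shows "S z = zero2" and "d = 0 \<or> z = zero2"
proof -
  have Sz: "S z \<in> H2" using lin z by (rule linear_op2_H2)
  have SSz: "S (S z) \<in> H2" using lin Sz by (rule linear_op2_H2)
  have "H2_inner (S z) (S z) + \<tau> * H2_inner (S z) z + d * H2_inner z z
      = H2_inner (add2 (add2 (S (S z)) (scale2 \<tau> (S z))) (scale2 d z)) z"
    using z Sz SSz pos_op2_selfadjoint[OF lin pos Sz z]
    by (simp add: H2_inner_add_left add2_H2 scale2_H2 H2_inner_scale_left)
  also have "\<dots> = 0"
    by (simp add: eq)
  finally have "Re (H2_inner (S z) (S z) + \<tau> * H2_inner (S z) z + d * H2_inner z z) = 0"
    by simp
  then have "Re (H2_inner (S z) (S z)) + \<tau> * Re (H2_inner (S z) z) + d * Re (H2_inner z z) = 0"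
    by simp
  moreover have "0 \<le> Re (H2_inner (S z) (S z))" "0 \<le> Re (H2_inner (S z) z)" "0 \<le> Re (H2_inner z z)"
    using pos z Sz by (simp_all add: pos_op2_def H2_inner_self_nonneg)
  ultimately have "Re (H2_inner (S z) (S z)) \<le> 0" "d * Re (H2_inner z z) \<le> 0"
    using assms(4,5) by (smt (verit) mult_nonneg_nonneg)+
  then show "S z = zero2" and "d = 0 \<or> z = zero2"
    using H2_inner_self_eq_0D[OF Sz] H2_inner_self_eq_0D[OF z] assms(5)
    by (auto simp: mult_le_0_iff)
qed

lemma linear_op2_quartic_factor:
  fixes t \<delta> \<tau> d :: real
  assumes lin: "linear_op2 S" and v: "v \<in> H2" and \<tau>: "\<tau> * \<tau> = t + 2 * d" and d: "d * d = \<delta>"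
    and quartic: "S (S (S (S v))) = add2 (scale2 (of_real t) (S (S v))) (scale2 (of_real (- \<delta>)) v)"
  defines "z \<equiv> add2 (add2 (S (S v)) (scale2 (of_real (- \<tau>)) (S v))) (scale2 (of_real d) v)"
  shows "add2 (add2 (S (S z)) (scale2 (of_real \<tau>) (S z))) (scale2 (of_real d) z) = zero2"
proof -
  have H: "S v \<in> H2" "S (S v) \<in> H2" "S (S (S v)) \<in> H2" "add2 (S (S v)) (scale2 (- \<tau>) (S v)) \<in> H2"
    using v lin by (simp_all add: linear_op2_H2 add2_H2 scale2_H2)
  have Sz: "S z = add2 (add2 (S (S (S v))) (scale2 (- \<tau>) (S (S v)))) (scale2 d (S v))"
    and SSz: "S (S z) =
      add2 (add2 (S (S (S (S v)))) (scale2 (- \<tau>) (S (S (S v))))) (scale2 d (S (S v)))"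
    using v H lin by (simp_all add: z_def linear_op2_lincomb add2_H2 scale2_H2 linear_op2_H2)
  have \<tau>c: "of_real \<tau> * (of_real \<tau> * x) = of_real t * x + 2 * (of_real d * x)" for x :: complex
    by (metis \<tau> distrib_right mult.assoc mult_2 of_real_add of_real_mult)
  have dc: "of_real d * (of_real d * x) = of_real \<delta> * x" for x :: complex
    by (metis d mult.assoc of_real_mult)
  show ?thesis
    unfolding SSz unfolding Sz unfolding quartic z_def
    by (simp add: add2_def scale2_def algebra_simps \<tau>c dc)
qed

text \<open>With \<open>d = \<surd>\<delta>\<close> and \<open>\<tau> = \<surd>(t + 2 d)\<close>, the vector \<open>z = S\<^sup>2 v - \<tau> S v + d v\<close> lies in the
  kernel of \<open>S\<^sup>2 + \<tau> S + d\<close>, and also in the range of \<open>S\<close> if \<open>d = 0\<close>; hence \<open>z = 0\<close>.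
  For \<open>\<tau> = 0\<close> both sides of the claim vanish, as \<open>1 / 0 = 0\<close>.\<close>

lemma pos_op2_root_of_quartic:
  fixes t \<delta> :: real
  assumes lin: "linear_op2 S" and pos: "pos_op2 S" and v: "v \<in> H2" and t: "t \<ge> 0" and \<delta>: "\<delta> \<ge> 0"
    and quartic: "S (S (S (S v))) = add2 (scale2 (of_real t) (S (S v))) (scale2 (of_real (- \<delta>)) v)"
  shows "S v =
    scale2 (of_real (1 / sqrt (t + 2 * sqrt \<delta>))) (add2 (S (S v)) (scale2 (of_real (sqrt \<delta>)) v))"
proof -
  define d where "d = sqrt \<delta>"
  define \<tau> where "\<tau> = sqrt (t + 2 * d)"
  have d: "d \<ge> 0" "d * d = \<delta>" using \<delta> by (simp_all add: d_def)
  have \<tau>: "\<tau> \<ge> 0" "\<tau> * \<tau> = t + 2 * d" using t d by (simp_all add: \<tau>_def)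
  define y where "y = add2 (S v) (scale2 (- \<tau>) v)"
  define z where "z = add2 (S y) (scale2 d v)"
  have y: "y \<in> H2" and z: "z \<in> H2"
    using v lin by (simp_all add: y_def z_def add2_H2 scale2_H2 linear_op2_H2)
  have Sy: "S y = add2 (S (S v)) (scale2 (- \<tau>) (S v))"
    using v lin by (simp add: y_def linear_op2_lincomb linear_op2_H2)
  have "S z = zero2" and "d = 0 \<or> z = zero2"
    using pos_op2_quadratic_kernel[OF lin pos z \<tau>(1) d(1)]
      linear_op2_quartic_factor[OF lin v \<tau>(2) d(2) quartic] by (simp_all add: z_def Sy)
  then have "z = zero2"
    using pos_op2_sq_eq_zero[OF lin pos y] by (auto simp: z_def add2_def scale2_def)
  then have "fst z k = 0" "snd z k = 0" for k
    by simp_all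
  then have z0: "fst (S (S v)) k = of_real \<tau> * fst (S v) k - of_real d * fst v k"
    "snd (S (S v)) k = of_real \<tau> * snd (S v) k - of_real d * snd v k" for k
    by (simp_all add: z_def Sy add2_def scale2_def algebra_simps eq_diff_eq)
  show ?thesis
  proof (cases "\<tau> = 0")
    case True
    then have "d = 0" using \<tau> d t by simp
    with True z0 have "S (S v) = zero2" by (simp add: prod_eq_iff fun_eq_iff)
    then have "S v = zero2" using pos_op2_sq_eq_zero[OF lin pos v] by blast
    with True show ?thesis by (simp add: \<tau>_def d_def scale2_def)
  next
    case False
    with z0 show ?thesis
      unfolding d_def[symmetric] \<tau>_def[symmetric]
      by (simp add: add2_def scale2_def prod_eq_iff fun_eq_iff field_simps)
  qed
qed

definition is_pos_sqrt :: "op2 \<Rightarrow> op2 \<Rightarrow> bool" where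
  "is_pos_sqrt P S \<longleftrightarrow> bounded_op2 S \<and> pos_op2 S \<and> (\<forall>u. u \<notin> H2 \<longrightarrow> S u = zero2) \<and>
     (\<forall>u\<in>H2. S (S u) = P u)"

definition satisfies_quadratic :: "op2 \<Rightarrow> vec \<times> vec \<Rightarrow> bool" where
  "satisfies_quadratic P e \<longleftrightarrow>
     (\<exists>t \<delta>. t \<ge> 0 \<and> \<delta> \<ge> 0 \<and>
       P (P e) = add2 (scale2 (of_real t) (P e)) (scale2 (of_real (- \<delta>)) e))"

lemma is_pos_sqrtD:
  assumes "is_pos_sqrt P S"
  shows "linear_op2 S" and "pos_op2 S" and "u \<notin> H2 \<Longrightarrow> S u = zero2"
    and "u \<in> H2 \<Longrightarrow> S (S u) = P u"
  using assms unfolding is_pos_sqrt_def by (blast intro: bounded_op2_imp_linear_op2)+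

lemma is_pos_sqrt_apply:
  fixes t \<delta> :: real
  assumes S: "is_pos_sqrt P S" and e: "e \<in> H2" and "t \<ge> 0" "\<delta> \<ge> 0"
    and quadratic: "P (P e) = add2 (scale2 (of_real t) (P e)) (scale2 (of_real (- \<delta>)) e)"
  shows "S e =
    scale2 (of_real (1 / sqrt (t + 2 * sqrt \<delta>))) (add2 (P e) (scale2 (of_real (sqrt \<delta>)) e))"
proof -
  note lin = is_pos_sqrtD(1)[OF S] and pos = is_pos_sqrtD(2)[OF S] and sq = is_pos_sqrtD(4)[OF S]
  have "S (S e) \<in> H2" using lin e by (simp add: linear_op2_H2)
  then have "S (S (S (S e))) = add2 (scale2 (of_real t) (S (S e))) (scale2 (of_real (- \<delta>)) e)"
    using e by (simp add: sq quadratic)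
  from pos_op2_root_of_quartic[OF lin pos e assms(3,4) this] show ?thesis
    using e by (simp add: sq)
qed

lemma pos_sqrt_unique:
  assumes S1: "is_pos_sqrt P S1" and S2: "is_pos_sqrt P S2"
    and quad: "\<And>k. satisfies_quadratic P (unit1 k)" "\<And>k. satisfies_quadratic P (unit2 k)"
  shows "S1 = S2"
proof
  fix u
  show "S1 u = S2 u"
  proof (cases "u \<in> H2")
    case False
    with is_pos_sqrtD(3)[OF S1] is_pos_sqrtD(3)[OF S2] show ?thesis by simp
  next
    case u: True
    have "H2_inner (S1 u) e = H2_inner (S2 u) e" if e: "e \<in> H2" "satisfies_quadratic P e" for e
    proof -
      obtain t \<delta> where q: "t \<ge> 0" "\<delta> \<ge> 0"
        "P (P e) = add2 (scale2 (of_real t) (P e)) (scale2 (of_real (- \<delta>)) e)"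
        using e(2) unfolding satisfies_quadratic_def by blast
      have S12: "S1 e = S2 e"
        unfolding is_pos_sqrt_apply[OF S1 e(1) q] is_pos_sqrt_apply[OF S2 e(1) q] ..
      have "H2_inner (S u) e = H2_inner u (S e)" if "is_pos_sqrt P S" for S
        using pos_op2_selfadjoint[OF is_pos_sqrtD(1,2)[OF that] u e(1)] .
      from this[OF S1] this[OF S2] show ?thesis by (simp add: S12)
    qed
    from this[OF unit1_H2 quad(1)] this[OF unit2_H2 quad(2)]
    have "fst (S1 u) k = fst (S2 u) k" "snd (S1 u) k = snd (S2 u) k" for k
      by simp_all
    then show ?thesis by (simp add: prod_eq_iff fun_eq_iff)
  qed
qed

lemma op_sqrt_eqI:
  assumes "is_pos_sqrt P S"
    and "\<And>k. satisfies_quadratic P (unit1 k)" "\<And>k. satisfies_quadratic P (unit2 k)"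
  shows "op_sqrt P = S"
proof -
  have "(THE S. is_pos_sqrt P S) = S"
    using assms pos_sqrt_unique by (intro the_equality) blast+
  then show ?thesis by (simp add: op_sqrt_def is_pos_sqrt_def)
qed

section \<open>Block-diagonal operators\<close>

type_synonym coeff = "nat \<times> nat \<Rightarrow> real"

definition shift1 :: "(nat \<times> nat \<Rightarrow> 'a::zero) \<Rightarrow> nat \<times> nat \<Rightarrow> 'a" where
  "shift1 f \<beta> = (if fst \<beta> = 0 then 0 else f (fst \<beta> - 1, snd \<beta>))"

definition shift2 :: "(nat \<times> nat \<Rightarrow> 'a::zero) \<Rightarrow> nat \<times> nat \<Rightarrow> 'a" where
  "shift2 f \<beta> = (if snd \<beta> = 0 then 0 else f (fst \<beta>, snd \<beta> - 1))"

lemma has_sum_shift1_iff: "(shift1 f has_sum s) UNIV \<longleftrightarrow> (f has_sum s) UNIV"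
proof -
  have "(shift1 f has_sum s) UNIV \<longleftrightarrow> (shift1 f has_sum s) {\<beta>. fst \<beta> \<noteq> 0}"
    by (rule has_sum_cong_neutral) (auto simp: shift1_def)
  also have "\<dots> \<longleftrightarrow> (f has_sum s) UNIV"
    by (rule has_sum_reindex_bij_witness[where i="\<lambda>k. (fst k + 1, snd k)"
          and j="\<lambda>\<beta>. (fst \<beta> - 1, snd \<beta>)"])
       (auto simp: shift1_def)
  finally show ?thesis .
qed

lemma has_sum_shift2_iff: "(shift2 f has_sum s) UNIV \<longleftrightarrow> (f has_sum s) UNIV"
proof -
  have "(shift2 f has_sum s) UNIV \<longleftrightarrow> (shift2 f has_sum s) {\<beta>. snd \<beta> \<noteq> 0}"
    by (rule has_sum_cong_neutral) (auto simp: shift2_def)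
  also have "\<dots> \<longleftrightarrow> (f has_sum s) UNIV"
    by (rule has_sum_reindex_bij_witness[where i="\<lambda>k. (fst k, snd k + 1)"
          and j="\<lambda>\<beta>. (fst \<beta>, snd \<beta> - 1)"])
       (auto simp: shift2_def)
  finally show ?thesis .
qed

lemma summable_on_shift1_iff: "shift1 f summable_on UNIV \<longleftrightarrow> f summable_on UNIV"
  and summable_on_shift2_iff: "shift2 f summable_on UNIV \<longleftrightarrow> f summable_on UNIV"
  by (simp_all add: summable_on_def has_sum_shift1_iff has_sum_shift2_iff)

lemma infsum_shift1: "infsum (shift1 f) UNIV = infsum f UNIV"
  and infsum_shift2: "infsum (shift2 f) UNIV = infsum f UNIV"
  by (metis has_sum_shift1_iff has_sum_shift2_iff infsumI infsum_not_exists summable_on_def)+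

lemma shift1_norm_sq: "(\<lambda>\<beta>. (cmod (shift1 x \<beta>))\<^sup>2) = shift1 (\<lambda>k. (cmod (x k))\<^sup>2)"
  and shift2_norm_sq: "(\<lambda>\<beta>. (cmod (shift2 x \<beta>))\<^sup>2) = shift2 (\<lambda>k. (cmod (x k))\<^sup>2)"
  by (auto simp: shift1_def shift2_def fun_eq_iff)

lemma shift1_prod: "(\<lambda>\<beta>. shift1 x \<beta> * cnj (shift1 y \<beta>)) = shift1 (\<lambda>k. x k * cnj (y k))"
  and shift2_prod: "(\<lambda>\<beta>. shift2 x \<beta> * cnj (shift2 y \<beta>)) = shift2 (\<lambda>k. x k * cnj (y k))"
  by (auto simp: shift1_def shift2_def fun_eq_iff)

lemma l2_shift1_iff: "shift1 x \<in> l2 \<longleftrightarrow> x \<in> l2"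
  and l2_shift2_iff: "shift2 x \<in> l2 \<longleftrightarrow> x \<in> l2"
  by (simp_all add: l2_def shift1_norm_sq shift2_norm_sq summable_on_shift1_iff
      summable_on_shift2_iff)

lemma l2_unshift1:
  assumes "y \<in> l2"
  shows "(\<lambda>k. y (fst k + 1, snd k)) \<in> l2"
proof -
  have "shift1 (\<lambda>k. (cmod (y (fst k + 1, snd k)))\<^sup>2) summable_on UNIV"
    by (rule summable_on_comparison_test[of "\<lambda>k. (cmod (y k))\<^sup>2"])
       (use assms in \<open>auto simp: l2_def shift1_def\<close>)
  then show ?thesis by (simp add: l2_def summable_on_shift1_iff)
qed

lemma l2_unshift2:
  assumes "y \<in> l2"
  shows "(\<lambda>k. y (fst k, snd k + 1)) \<in> l2"
proof -
  have "shift2 (\<lambda>k. (cmod (y (fst k, snd k + 1)))\<^sup>2) summable_on UNIV"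
    by (rule summable_on_comparison_test[of "\<lambda>k. (cmod (y k))\<^sup>2"])
       (use assms in \<open>auto simp: l2_def shift2_def\<close>)
  then show ?thesis by (simp add: l2_def summable_on_shift2_iff)
qed

text \<open>The \<open>\<beta>\<close>-th block of \<open>(x, y)\<close> consists of \<open>x (\<beta> - e\<^sub>2)\<close> and \<open>y (\<beta> - e\<^sub>1)\<close>;
  coordinates that would leave \<open>\<nat>\<^sup>2\<close> read as 0.\<close>

abbreviation block1 :: "vec \<times> vec \<Rightarrow> nat \<times> nat \<Rightarrow> complex" where
  "block1 u \<equiv> shift2 (fst u)"

abbreviation block2 :: "vec \<times> vec \<Rightarrow> nat \<times> nat \<Rightarrow> complex" where
  "block2 u \<equiv> shift1 (snd u)"

lemma block_eqI:
  assumes "\<And>\<beta>. block1 u \<beta> = block1 v \<beta>" "\<And>\<beta>. block2 u \<beta> = block2 v \<beta>"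
  shows "u = v"
proof -
  have "fst u k = fst v k" "snd u k = snd v k" for k
    using assms(1)[of "(fst k, snd k + 1)"] assms(2)[of "(fst k + 1, snd k)"]
    by (simp_all add: shift1_def shift2_def)
  then show ?thesis by (simp add: prod_eq_iff fun_eq_iff)
qed

lemma block_add2 [simp]:
  "block1 (add2 u v) \<beta> = block1 u \<beta> + block1 v \<beta>" "block2 (add2 u v) \<beta> = block2 u \<beta> + block2 v \<beta>"
  by (simp_all add: shift1_def shift2_def add2_def)

lemma block_scale2 [simp]:
  "block1 (scale2 c u) \<beta> = c * block1 u \<beta>" "block2 (scale2 c u) \<beta> = c * block2 u \<beta>"
  by (simp_all add: shift1_def shift2_def scale2_def)

lemma H2_iff_blocks:
  "u \<in> H2 \<longleftrightarrow>
    (\<lambda>\<beta>. (cmod (block1 u \<beta>))\<^sup>2) summable_on UNIV \<and> (\<lambda>\<beta>. (cmod (block2 u \<beta>))\<^sup>2) summable_on UNIV"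
  by (simp add: H2_iff l2_def shift1_norm_sq shift2_norm_sq summable_on_shift1_iff
      summable_on_shift2_iff)

lemma H2_inner_blocks:
  "H2_inner v u = (\<Sum>\<^sub>\<infinity>\<beta>. block1 v \<beta> * cnj (block1 u \<beta>)) + (\<Sum>\<^sub>\<infinity>\<beta>. block2 v \<beta> * cnj (block2 u \<beta>))"
  by (simp add: H2_inner_def l2_inner_def shift1_prod shift2_prod infsum_shift1 infsum_shift2)

lemma blocks_prod_summable:
  assumes "v \<in> H2" "u \<in> H2"
  shows "(\<lambda>\<beta>. block1 v \<beta> * cnj (block1 u \<beta>)) summable_on UNIV"
    and "(\<lambda>\<beta>. block2 v \<beta> * cnj (block2 u \<beta>)) summable_on UNIV"
  using assms by (simp_all add: H2_iff shift1_prod shift2_prod summable_on_shift1_iff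
      summable_on_shift2_iff l2_prod_summable)

lemma H2_inner_self_blocks:
  assumes "u \<in> H2"
  shows "Re (H2_inner u u) = (\<Sum>\<^sub>\<infinity>\<beta>. (cmod (block1 u \<beta>))\<^sup>2 + (cmod (block2 u \<beta>))\<^sup>2)"
proof -
  have "Re (H2_inner u u) = (\<Sum>\<^sub>\<infinity>k. (cmod (fst u k))\<^sup>2) + (\<Sum>\<^sub>\<infinity>k. (cmod (snd u k))\<^sup>2)"
    using assms by (simp add: H2_iff H2_inner_def l2_inner_self)
  also have "\<dots> = (\<Sum>\<^sub>\<infinity>\<beta>. (cmod (block1 u \<beta>))\<^sup>2) + (\<Sum>\<^sub>\<infinity>\<beta>. (cmod (block2 u \<beta>))\<^sup>2)"
    by (simp add: shift1_norm_sq shift2_norm_sq infsum_shift1 infsum_shift2)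
  also have "\<dots> = (\<Sum>\<^sub>\<infinity>\<beta>. (cmod (block1 u \<beta>))\<^sup>2 + (cmod (block2 u \<beta>))\<^sup>2)"
    using assms by (simp add: H2_iff_blocks infsum_add)
  finally show ?thesis .
qed

text \<open>The operator acting on the block \<open>\<beta>\<close> by the matrix \<open>[[a \<beta>, b \<beta>], [b \<beta>, c \<beta>]]\<close>.\<close>

definition block_op :: "coeff \<Rightarrow> coeff \<Rightarrow> coeff \<Rightarrow> op2" where
  "block_op a b c u =
     (\<lambda>k. of_real (a (fst k, snd k + 1)) * fst u k
        + of_real (b (fst k, snd k + 1)) * block2 u (fst k, snd k + 1),
      \<lambda>k. of_real (b (fst k + 1, snd k)) * block1 u (fst k + 1, snd k)
        + of_real (c (fst k + 1, snd k)) * snd u k)"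

text \<open>Blocks on the axes are one-dimensional, so the off-diagonal entry has to vanish there.\<close>

definition vanishes_on_axes :: "coeff \<Rightarrow> bool" where
  "vanishes_on_axes b \<longleftrightarrow> (\<forall>\<beta>. fst \<beta> = 0 \<or> snd \<beta> = 0 \<longrightarrow> b \<beta> = 0)"

lemma block_block_op:
  assumes "vanishes_on_axes b"
  shows "block1 (block_op a b c u) \<beta> = of_real (a \<beta>) * block1 u \<beta> + of_real (b \<beta>) * block2 u \<beta>"
    and "block2 (block_op a b c u) \<beta> = of_real (b \<beta>) * block1 u \<beta> + of_real (c \<beta>) * block2 u \<beta>"
  using assms by (cases \<beta>; auto simp: vanishes_on_axes_def block_op_def shift1_def shift2_def)+

lemma block_op_add2:
  "vanishes_on_axes b \<Longrightarrow> block_op a b c (add2 u v) = add2 (block_op a b c u) (block_op a b c v)"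
  by (rule block_eqI) (simp_all add: block_block_op algebra_simps)

lemma block_op_scale2:
  "vanishes_on_axes b \<Longrightarrow> block_op a b c (scale2 s u) = scale2 s (block_op a b c u)"
  by (rule block_eqI) (simp_all add: block_block_op algebra_simps)

lemma block_op_block_op:
  assumes "vanishes_on_axes b"
  shows "block_op a b c (block_op a b c u) =
    block_op (\<lambda>\<beta>. (a \<beta>)\<^sup>2 + (b \<beta>)\<^sup>2) (\<lambda>\<beta>. b \<beta> * (a \<beta> + c \<beta>)) (\<lambda>\<beta>. (b \<beta>)\<^sup>2 + (c \<beta>)\<^sup>2) u"
proof -
  have "vanishes_on_axes (\<lambda>\<beta>. b \<beta> * (a \<beta> + c \<beta>))"
    using assms by (simp add: vanishes_on_axes_def)
  with assms show ?thesis
    by (intro block_eqI) (simp_all add: block_block_op algebra_simps power2_eq_square)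
qed

definition bounded_coeffs :: "real \<Rightarrow> coeff \<Rightarrow> coeff \<Rightarrow> coeff \<Rightarrow> bool" where
  "bounded_coeffs K a b c \<longleftrightarrow> (\<forall>\<beta>. \<bar>a \<beta>\<bar> \<le> K \<and> \<bar>b \<beta>\<bar> \<le> K \<and> \<bar>c \<beta>\<bar> \<le> K)"

lemma norm_lincomb_sq_le:
  assumes "\<bar>a\<bar> \<le> K" "\<bar>b\<bar> \<le> K"
  shows "(cmod (of_real a * x + of_real b * y))\<^sup>2 \<le> 2 * K\<^sup>2 * ((cmod x)\<^sup>2 + (cmod y)\<^sup>2)"
proof -
  have "cmod (of_real a * x + of_real b * y) \<le> \<bar>a\<bar> * cmod x + \<bar>b\<bar> * cmod y"
    using norm_triangle_ineq[of "of_real a * x" "of_real b * y"] by (simp add: norm_mult)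
  also have "\<dots> \<le> K * cmod x + K * cmod y"
    using assms by (intro add_mono mult_right_mono) auto
  finally have "(cmod (of_real a * x + of_real b * y))\<^sup>2 \<le> (K * (cmod x + cmod y))\<^sup>2"
    by (intro power_mono) (auto simp: distrib_left)
  also have "\<dots> \<le> K\<^sup>2 * (2 * ((cmod x)\<^sup>2 + (cmod y)\<^sup>2))"
    unfolding power_mult_distrib
    using sum_squares_bound[of "cmod x" "cmod y"] by (intro mult_left_mono) (auto simp: power2_sum)
  finally show ?thesis by (simp add: algebra_simps)
qed

lemma block_op_norm_sq_le:
  assumes "vanishes_on_axes b" "bounded_coeffs K a b c"
  shows "(cmod (block1 (block_op a b c u) \<beta>))\<^sup>2
      \<le> 2 * K\<^sup>2 * ((cmod (block1 u \<beta>))\<^sup>2 + (cmod (block2 u \<beta>))\<^sup>2)"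
    and "(cmod (block2 (block_op a b c u) \<beta>))\<^sup>2
      \<le> 2 * K\<^sup>2 * ((cmod (block1 u \<beta>))\<^sup>2 + (cmod (block2 u \<beta>))\<^sup>2)"
  using assms(2)[unfolded bounded_coeffs_def, rule_format, of \<beta>]
  by (simp_all add: block_block_op[OF assms(1)] norm_lincomb_sq_le)

lemma block_op_H2:
  assumes "vanishes_on_axes b" "bounded_coeffs K a b c" "u \<in> H2"
  shows "block_op a b c u \<in> H2"
proof -
  have "(\<lambda>\<beta>. 2 * K\<^sup>2 * ((cmod (block1 u \<beta>))\<^sup>2 + (cmod (block2 u \<beta>))\<^sup>2)) summable_on UNIV"
    using assms(3) by (intro summable_on_cmult_right summable_on_add) (simp_all add: H2_iff_blocks)
  then show ?thesis
    unfolding H2_iff_blocks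
    by (auto intro: summable_on_comparison_test block_op_norm_sq_le[OF assms(1,2)])
qed

lemma block_op_norm_le:
  assumes "vanishes_on_axes b" "bounded_coeffs K a b c" "u \<in> H2"
  shows "H2_norm (block_op a b c u) \<le> 2 * K * H2_norm u"
proof -
  have K: "0 \<le> K"
    using assms(2) by (auto simp: bounded_coeffs_def intro: order_trans[OF abs_ge_zero])
  have u: "(\<lambda>\<beta>. (cmod (block1 u \<beta>))\<^sup>2) summable_on UNIV"
    "(\<lambda>\<beta>. (cmod (block2 u \<beta>))\<^sup>2) summable_on UNIV"
    using assms(3) by (simp_all add: H2_iff_blocks)
  have Bu: "block_op a b c u \<in> H2" using block_op_H2[OF assms] .
  have "Re (H2_inner (block_op a b c u) (block_op a b c u))
      \<le> (\<Sum>\<^sub>\<infinity>\<beta>. 4 * K\<^sup>2 * ((cmod (block1 u \<beta>))\<^sup>2 + (cmod (block2 u \<beta>))\<^sup>2))"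
    unfolding H2_inner_self_blocks[OF Bu]
  proof (rule infsum_mono)
    show "(\<lambda>\<beta>. (cmod (block1 (block_op a b c u) \<beta>))\<^sup>2 + (cmod (block2 (block_op a b c u) \<beta>))\<^sup>2)
        summable_on UNIV"
      using Bu by (intro summable_on_add) (simp_all add: H2_iff_blocks)
    show "(\<lambda>\<beta>. 4 * K\<^sup>2 * ((cmod (block1 u \<beta>))\<^sup>2 + (cmod (block2 u \<beta>))\<^sup>2)) summable_on UNIV"
      using u by (intro summable_on_cmult_right summable_on_add)
  next
    fix \<beta>
    show "(cmod (block1 (block_op a b c u) \<beta>))\<^sup>2 + (cmod (block2 (block_op a b c u) \<beta>))\<^sup>2
        \<le> 4 * K\<^sup>2 * ((cmod (block1 u \<beta>))\<^sup>2 + (cmod (block2 u \<beta>))\<^sup>2)"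
      using block_op_norm_sq_le[OF assms(1,2), of u \<beta>] by linarith
  qed
  also have "\<dots> = (2 * K)\<^sup>2 * Re (H2_inner u u)"
    using u by (simp add: H2_inner_self_blocks[OF assms(3)] infsum_cmult_right summable_on_add)
  finally have "sqrt (Re (H2_inner (block_op a b c u) (block_op a b c u)))
      \<le> sqrt ((2 * K)\<^sup>2 * Re (H2_inner u u))"
    by (rule real_sqrt_le_mono)
  then show ?thesis
    using K by (simp add: H2_norm_def real_sqrt_mult)
qed

definition psd_coeffs :: "coeff \<Rightarrow> coeff \<Rightarrow> coeff \<Rightarrow> bool" where
  "psd_coeffs a b c \<longleftrightarrow> (\<forall>\<beta>. 0 \<le> a \<beta> \<and> 0 \<le> c \<beta> \<and> (b \<beta>)\<^sup>2 \<le> a \<beta> * c \<beta>)"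

lemma psd_quadratic_form_nonneg:
  fixes a b c x y :: real
  assumes "0 \<le> a" "0 \<le> c" "b\<^sup>2 \<le> a * c"
  shows "0 \<le> a * x\<^sup>2 + 2 * b * x * y + c * y\<^sup>2"
proof (cases "a = 0")
  case True
  with assms show ?thesis by simp
next
  case False
  have "a * (a * x\<^sup>2 + 2 * b * x * y + c * y\<^sup>2) = (a * x + b * y)\<^sup>2 + (a * c - b\<^sup>2) * y\<^sup>2"
    by (simp add: power2_eq_square algebra_simps)
  also have "\<dots> \<ge> 0" using assms by simp
  finally show ?thesis using False assms(1) by (simp add: zero_le_mult_iff)
qed

lemma psd_hermitian_form_nonneg:
  fixes a b c :: real and x y :: complex
  assumes "0 \<le> a" "0 \<le> c" "b\<^sup>2 \<le> a * c"
  defines "q \<equiv> (of_real a * x + of_real b * y) * cnj x + (of_real b * x + of_real c * y) * cnj y"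
  shows "Im q = 0" and "0 \<le> Re q"
proof -
  show "Im q = 0" by (simp add: q_def algebra_simps)
  have "Re q = (a * (Re x)\<^sup>2 + 2 * b * Re x * Re y + c * (Re y)\<^sup>2)
      + (a * (Im x)\<^sup>2 + 2 * b * Im x * Im y + c * (Im y)\<^sup>2)"
    by (simp add: q_def algebra_simps power2_eq_square)
  then show "0 \<le> Re q"
    using psd_quadratic_form_nonneg[OF assms(1-3)] by (metis add_nonneg_nonneg)
qed

lemma block_op_pos:
  assumes "vanishes_on_axes b" "bounded_coeffs K a b c" "psd_coeffs a b c" "u \<in> H2"
  shows "Im (H2_inner (block_op a b c u) u) = 0" and "0 \<le> Re (H2_inner (block_op a b c u) u)"
proof -
  have Bu: "block_op a b c u \<in> H2" using block_op_H2[OF assms(1,2,4)] .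
  define q where "q \<beta> = block1 (block_op a b c u) \<beta> * cnj (block1 u \<beta>)
    + block2 (block_op a b c u) \<beta> * cnj (block2 u \<beta>)" for \<beta>
  have q: "q summable_on UNIV"
    unfolding q_def using blocks_prod_summable[OF Bu assms(4)] by (rule summable_on_add)
  have H: "H2_inner (block_op a b c u) u = (\<Sum>\<^sub>\<infinity>\<beta>. q \<beta>)"
    unfolding q_def H2_inner_blocks using blocks_prod_summable[OF Bu assms(4)]
    by (simp add: infsum_add)
  have "Im (q \<beta>) = 0 \<and> 0 \<le> Re (q \<beta>)" for \<beta>
  proof -
    have "0 \<le> a \<beta>" "0 \<le> c \<beta>" "(b \<beta>)\<^sup>2 \<le> a \<beta> * c \<beta>"
      using assms(3) unfolding psd_coeffs_def by blast+
    from psd_hermitian_form_nonneg[OF this, of "block1 u \<beta>" "block2 u \<beta>"] show ?thesis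
      by (simp add: q_def block_block_op[OF assms(1)])
  qed
  then show "Im (H2_inner (block_op a b c u) u) = 0" and "0 \<le> Re (H2_inner (block_op a b c u) u)"
    using q by (simp_all add: H infsum_Im[symmetric] infsum_Re[symmetric] infsum_nonneg)
qed

definition sqrt_det :: "real \<Rightarrow> real \<Rightarrow> real \<Rightarrow> real" where
  "sqrt_det a b c = sqrt (a * c - b\<^sup>2)"

definition sqrt_trace :: "real \<Rightarrow> real \<Rightarrow> real \<Rightarrow> real" where
  "sqrt_trace a b c = sqrt (a + c + 2 * sqrt_det a b c)"

text \<open>The square root of a positive semidefinite \<open>M = [[a, b], [b, c]]\<close> is
  \<open>(M + \<surd>(det M) I) / \<surd>(tr M + 2 \<surd>(det M))\<close>, by Cayley-Hamilton.\<close>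

lemma sqrt_2x2:
  fixes a b c :: real
  assumes a: "0 \<le> a" and c: "0 \<le> c" and bc: "b\<^sup>2 \<le> a * c"
  defines "d \<equiv> sqrt_det a b c" and "\<tau> \<equiv> sqrt_trace a b c"
  shows "((a + d) / \<tau>)\<^sup>2 + (b / \<tau>)\<^sup>2 = a"
    and "(b / \<tau>) * ((a + d) / \<tau> + (c + d) / \<tau>) = b"
    and "(b / \<tau>)\<^sup>2 + ((c + d) / \<tau>)\<^sup>2 = c"
    and "0 \<le> (a + d) / \<tau>" and "0 \<le> (c + d) / \<tau>"
    and "(b / \<tau>)\<^sup>2 \<le> (a + d) / \<tau> * ((c + d) / \<tau>)"
proof -
  have d: "0 \<le> d" "d * d = a * c - b * b"
    using bc by (simp_all add: d_def sqrt_det_def power2_eq_square)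
  have \<tau>: "0 \<le> \<tau>" "\<tau> * \<tau> = a + c + 2 * d"
    using a c d by (simp_all add: \<tau>_def sqrt_trace_def d_def)
  show "0 \<le> (a + d) / \<tau>" "0 \<le> (c + d) / \<tau>"
    using a c d \<tau> by simp_all
  have "b * b \<le> a * c"
    using bc by (simp add: power2_eq_square)
  also have "\<dots> \<le> (a + d) * (c + d)"
    using a c d by (intro mult_mono) auto
  finally show "(b / \<tau>)\<^sup>2 \<le> (a + d) / \<tau> * ((c + d) / \<tau>)"
    by (simp add: power2_eq_square divide_right_mono)
  have "((a + d) / \<tau>)\<^sup>2 + (b / \<tau>)\<^sup>2 = a \<and> (b / \<tau>) * ((a + d) / \<tau> + (c + d) / \<tau>) = b
    \<and> (b / \<tau>)\<^sup>2 + ((c + d) / \<tau>)\<^sup>2 = c"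
  proof (cases "\<tau> = 0")
    case True
    with a c d \<tau> have "a = 0" "c = 0" "b = 0"
      by (smt (verit) mult_eq_0_iff)+
    with True show ?thesis by simp
  next
    case False
    have "(a + d) * (a + d) + b * b = a * (\<tau> * \<tau>)"
      using d(2) unfolding \<tau>(2) by algebra
    moreover have "b * ((a + d) + (c + d)) = b * (\<tau> * \<tau>)"
      unfolding \<tau>(2) by algebra
    moreover have "b * b + (c + d) * (c + d) = c * (\<tau> * \<tau>)"
      using d(2) unfolding \<tau>(2) by algebra
    ultimately show ?thesis using False
      by (simp add: power2_eq_square field_simps) algebra
  qed
  then show "((a + d) / \<tau>)\<^sup>2 + (b / \<tau>)\<^sup>2 = a"
    and "(b / \<tau>) * ((a + d) / \<tau> + (c + d) / \<tau>) = b"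
    and "(b / \<tau>)\<^sup>2 + ((c + d) / \<tau>)\<^sup>2 = c"
    by blast+
qed

definition root_a :: "coeff \<Rightarrow> coeff \<Rightarrow> coeff \<Rightarrow> coeff" where
  "root_a a b c \<beta> = (a \<beta> + sqrt_det (a \<beta>) (b \<beta>) (c \<beta>)) / sqrt_trace (a \<beta>) (b \<beta>) (c \<beta>)"

definition root_b :: "coeff \<Rightarrow> coeff \<Rightarrow> coeff \<Rightarrow> coeff" where
  "root_b a b c \<beta> = b \<beta> / sqrt_trace (a \<beta>) (b \<beta>) (c \<beta>)"

definition root_c :: "coeff \<Rightarrow> coeff \<Rightarrow> coeff \<Rightarrow> coeff" where
  "root_c a b c \<beta> = (c \<beta> + sqrt_det (a \<beta>) (b \<beta>) (c \<beta>)) / sqrt_trace (a \<beta>) (b \<beta>) (c \<beta>)"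

definition block_sqrt :: "coeff \<Rightarrow> coeff \<Rightarrow> coeff \<Rightarrow> op2" where
  "block_sqrt a b c u =
    (if u \<in> H2 then block_op (root_a a b c) (root_b a b c) (root_c a b c) u else zero2)"

lemma root_coeffs:
  assumes "psd_coeffs a b c"
  shows "(root_a a b c \<beta>)\<^sup>2 + (root_b a b c \<beta>)\<^sup>2 = a \<beta>"
    and "root_b a b c \<beta> * (root_a a b c \<beta> + root_c a b c \<beta>) = b \<beta>"
    and "(root_b a b c \<beta>)\<^sup>2 + (root_c a b c \<beta>)\<^sup>2 = c \<beta>"
    and "psd_coeffs (root_a a b c) (root_b a b c) (root_c a b c)"
proof -
  have "0 \<le> a \<beta>" "0 \<le> c \<beta>" "(b \<beta>)\<^sup>2 \<le> a \<beta> * c \<beta>" for \<beta>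
    using assms unfolding psd_coeffs_def by blast+
  note sq = sqrt_2x2[OF this, folded root_a_def root_b_def root_c_def]
  show "(root_a a b c \<beta>)\<^sup>2 + (root_b a b c \<beta>)\<^sup>2 = a \<beta>"
    and "root_b a b c \<beta> * (root_a a b c \<beta> + root_c a b c \<beta>) = b \<beta>"
    and "(root_b a b c \<beta>)\<^sup>2 + (root_c a b c \<beta>)\<^sup>2 = c \<beta>"
    and "psd_coeffs (root_a a b c) (root_b a b c) (root_c a b c)"
    using sq by (auto simp: psd_coeffs_def)
qed

lemma root_b_vanishes_on_axes: "vanishes_on_axes b \<Longrightarrow> vanishes_on_axes (root_b a b c)"
  by (simp add: vanishes_on_axes_def root_b_def)

lemma root_coeffs_bounded:
  assumes "psd_coeffs a b c" "bounded_coeffs K a b c"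
  shows "bounded_coeffs (sqrt K) (root_a a b c) (root_b a b c) (root_c a b c)"
  unfolding bounded_coeffs_def
proof
  fix \<beta>
  have "a \<beta> \<le> K" "c \<beta> \<le> K" using assms(2) unfolding bounded_coeffs_def by (meson abs_le_D1)+
  then have "(root_a a b c \<beta>)\<^sup>2 \<le> K" "(root_b a b c \<beta>)\<^sup>2 \<le> K" "(root_c a b c \<beta>)\<^sup>2 \<le> K"
    using root_coeffs(1,3)[OF assms(1), of \<beta>] zero_le_power2[of "root_a a b c \<beta>"]
      zero_le_power2[of "root_b a b c \<beta>"] zero_le_power2[of "root_c a b c \<beta>"] by linarith+
  then show "\<bar>root_a a b c \<beta>\<bar> \<le> sqrt K \<and> \<bar>root_b a b c \<beta>\<bar> \<le> sqrt K \<and> \<bar>root_c a b c \<beta>\<bar> \<le> sqrt K"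
    by (metis real_sqrt_abs real_sqrt_le_mono)
qed

lemma block_sqrt_is_pos_sqrt:
  assumes b: "vanishes_on_axes b" and psd: "psd_coeffs a b c" and K: "bounded_coeffs K a b c"
    and P: "\<And>u. u \<in> H2 \<Longrightarrow> P u = block_op a b c u"
  shows "is_pos_sqrt P (block_sqrt a b c)"
proof -
  note rb = root_b_vanishes_on_axes[OF b] and rK = root_coeffs_bounded[OF psd K]
  have "bounded_op2 (block_sqrt a b c)"
    unfolding bounded_op2_def using block_op_H2[OF rb rK] block_op_norm_le[OF rb rK]
    by (auto simp: block_sqrt_def block_op_add2[OF rb] block_op_scale2[OF rb] add2_H2 scale2_H2
        intro!: exI[where x = "2 * sqrt K"])
  moreover have "pos_op2 (block_sqrt a b c)"
    unfolding pos_op2_def using block_op_pos[OF rb rK root_coeffs(4)[OF psd]]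
    by (simp add: block_sqrt_def)
  moreover have "block_sqrt a b c (block_sqrt a b c u) = P u" if "u \<in> H2" for u
    using that block_op_H2[OF rb rK that]
    by (simp add: block_sqrt_def P block_op_block_op[OF rb] root_coeffs(1-3)[OF psd])
  ultimately show ?thesis
    by (simp add: is_pos_sqrt_def block_sqrt_def)
qed

text \<open>Cayley-Hamilton for the matrix of the block \<open>\<beta>\<^sub>0\<close>.\<close>

lemma block_op_satisfies_quadratic:
  assumes b: "vanishes_on_axes b" and psd: "psd_coeffs a b c" and K: "bounded_coeffs K a b c"
    and P: "\<And>u. u \<in> H2 \<Longrightarrow> P u = block_op a b c u"
    and e: "e \<in> H2" and supp: "\<And>\<beta>. \<beta> \<noteq> \<beta>\<^sub>0 \<Longrightarrow> block1 e \<beta> = 0 \<and> block2 e \<beta> = 0"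
  shows "satisfies_quadratic P e"
proof -
  define t where "t = a \<beta>\<^sub>0 + c \<beta>\<^sub>0"
  define \<delta> where "\<delta> = a \<beta>\<^sub>0 * c \<beta>\<^sub>0 - (b \<beta>\<^sub>0)\<^sup>2"
  have "0 \<le> t" "0 \<le> \<delta>"
    using psd unfolding psd_coeffs_def t_def \<delta>_def by (metis add_nonneg_nonneg diff_ge_0_iff_ge)+
  moreover have "block_op a b c (block_op a b c e)
      = add2 (scale2 (of_real t) (block_op a b c e)) (scale2 (of_real (- \<delta>)) e)"
  proof (rule block_eqI)
    fix \<beta>
    show "block1 (block_op a b c (block_op a b c e)) \<beta>
        = block1 (add2 (scale2 (of_real t) (block_op a b c e)) (scale2 (of_real (- \<delta>)) e)) \<beta>"
      and "block2 (block_op a b c (block_op a b c e)) \<beta>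
        = block2 (add2 (scale2 (of_real t) (block_op a b c e)) (scale2 (of_real (- \<delta>)) e)) \<beta>"
      using supp[of \<beta>]
      by (cases "\<beta> = \<beta>\<^sub>0";
          simp add: block_block_op[OF b] t_def \<delta>_def algebra_simps power2_eq_square)+
  qed
  ultimately show ?thesis
    unfolding satisfies_quadratic_def using e block_op_H2[OF b K e] by (auto simp: P)
qed

lemma block_unit1:
    "block1 (unit1 k) \<beta> = (if \<beta> = (fst k, snd k + 1) then 1 else 0)" "block2 (unit1 k) \<beta> = 0"
  and block_unit2:
    "block1 (unit2 k) \<beta> = 0" "block2 (unit2 k) \<beta> = (if \<beta> = (fst k + 1, snd k) then 1 else 0)"
  by (cases \<beta>; auto simp: unit1_def unit2_def unit_vec_def shift1_def shift2_def)+

theorem op_sqrt_block_op: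
  assumes "vanishes_on_axes b" "psd_coeffs a b c" "bounded_coeffs K a b c"
    and "\<And>u. u \<in> H2 \<Longrightarrow> P u = block_op a b c u"
  shows "op_sqrt P = block_sqrt a b c"
proof (rule op_sqrt_eqI[OF block_sqrt_is_pos_sqrt[OF assms]])
  fix k
  show "satisfies_quadratic P (unit1 k)" "satisfies_quadratic P (unit2 k)"
    using block_op_satisfies_quadratic[OF assms] unit1_H2 unit2_H2
    by (auto simp: block_unit1 block_unit2)
qed

lemma H2_inner_unit_pair [simp]: "H2_inner w (unit_vec k, unit_vec l) = fst w k + snd w l"
  by (simp add: H2_inner_def)

lemma H2_inner_block_op_test_vector:
  fixes i j :: nat
  defines "u \<equiv> (unit_vec (Suc i, j), unit_vec (i, Suc j))"
  shows "H2_inner (block_op a b c u) u =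
    of_real (a (Suc i, Suc j) + 2 * b (Suc i, Suc j) + c (Suc i, Suc j))"
  unfolding u_def H2_inner_unit_pair by (simp add: block_op_def shift1_def shift2_def unit_vec_def)

section \<open>The Drury-Arveson shift\<close>

definition weight1 :: "nat \<times> nat \<Rightarrow> real" where
  "weight1 k = sqrt (real (fst k + 1) / real (fst k + snd k + 1))"

definition weight2 :: "nat \<times> nat \<Rightarrow> real" where
  "weight2 k = sqrt (real (snd k + 1) / real (fst k + snd k + 1))"

lemma weight_bounds: "0 \<le> weight1 k" "weight1 k \<le> 1" "0 \<le> weight2 k" "weight2 k \<le> 1"
  by (simp_all add: weight1_def weight2_def)

lemma weight_sq:
  "(weight1 k)\<^sup>2 = real (fst k + 1) / real (fst k + snd k + 1)"
  "(weight2 k)\<^sup>2 = real (snd k + 1) / real (fst k + snd k + 1)"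
  by (simp_all add: weight1_def weight2_def)

lemma DA1_eq: "DA1 x = shift1 (\<lambda>k. of_real (weight1 k) * x k)"
proof
  fix j :: "nat \<times> nat"
  obtain j1 j2 where j: "j = (j1, j2)" by fastforce
  show "DA1 x j = shift1 (\<lambda>k. of_real (weight1 k) * x k) j"
  proof (cases j1)
    case (Suc m)
    have "real (Suc m) / real (Suc m + j2) = real (m + 1) / real (m + j2 + 1)" by simp
    with Suc show ?thesis by (simp add: j DA1_def shift1_def weight1_def)
  qed (simp add: j DA1_def shift1_def)
qed

lemma DA2_eq: "DA2 x = shift2 (\<lambda>k. of_real (weight2 k) * x k)"
proof
  fix j :: "nat \<times> nat"
  obtain j1 j2 where j: "j = (j1, j2)" by fastforce
  show "DA2 x j = shift2 (\<lambda>k. of_real (weight2 k) * x k) j"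
  proof (cases j2)
    case (Suc m)
    have "real (Suc m) / real (j1 + Suc m) = real (m + 1) / real (j1 + m + 1)" by simp
    with Suc show ?thesis by (simp add: j DA2_def shift2_def weight2_def)
  qed (simp add: j DA2_def shift2_def)
qed

definition DA1_adj :: "vec \<Rightarrow> vec" where
  "DA1_adj y = (\<lambda>k. of_real (weight1 k) * y (fst k + 1, snd k))"

definition DA2_adj :: "vec \<Rightarrow> vec" where
  "DA2_adj y = (\<lambda>k. of_real (weight2 k) * y (fst k, snd k + 1))"

lemma DA_l2:
  assumes "x \<in> l2"
  shows "DA1 x \<in> l2" "DA2 x \<in> l2" "DA1_adj x \<in> l2" "DA2_adj x \<in> l2"
proof -
  have w: "\<bar>weight1 k\<bar> \<le> 1" "\<bar>weight2 k\<bar> \<le> 1" for k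
    using weight_bounds by simp_all
  show "DA1 x \<in> l2" unfolding DA1_eq l2_shift1_iff by (rule l2_weighted[OF assms w(1)])
  show "DA2 x \<in> l2" unfolding DA2_eq l2_shift2_iff by (rule l2_weighted[OF assms w(2)])
  show "DA1_adj x \<in> l2" unfolding DA1_adj_def by (rule l2_weighted[OF l2_unshift1[OF assms] w(1)])
  show "DA2_adj x \<in> l2" unfolding DA2_adj_def by (rule l2_weighted[OF l2_unshift2[OF assms] w(2)])
qed

lemma adj_DA1: "y \<in> l2 \<Longrightarrow> adj DA1 y = DA1_adj y"
  and adj_DA2: "y \<in> l2 \<Longrightarrow> adj DA2 y = DA2_adj y"
proof -
  have "(\<lambda>j. DA1 x j * cnj (y j)) =
      shift1 (\<lambda>k. of_real (weight1 k) * x k * cnj (y (fst k + 1, snd k)))"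
    and "(\<lambda>j. DA2 x j * cnj (y j)) =
      shift2 (\<lambda>k. of_real (weight2 k) * x k * cnj (y (fst k, snd k + 1)))"
    for x
    by (auto simp: DA1_eq DA2_eq shift1_def shift2_def fun_eq_iff)
  then have "l2_inner (DA1 x) y = l2_inner x (DA1_adj y)"
    and "l2_inner (DA2 x) y = l2_inner x (DA2_adj y)" for x
    by (simp_all add: l2_inner_def infsum_shift1 infsum_shift2 DA1_adj_def DA2_adj_def mult_ac)
  then show "y \<in> l2 \<Longrightarrow> adj DA1 y = DA1_adj y" "y \<in> l2 \<Longrightarrow> adj DA2 y = DA2_adj y"
    by (simp_all add: adj_eqI DA_l2)
qed

definition L_a :: coeff where
  "L_a \<beta> = (if snd \<beta> = 0 then 0 else (weight1 (fst \<beta>, snd \<beta> - 1))\<^sup>2)"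

definition L_b :: coeff where
  "L_b \<beta> =
    (if fst \<beta> = 0 \<or> snd \<beta> = 0 then 0 else weight2 (fst \<beta>, snd \<beta> - 1) * weight1 (fst \<beta> - 1, snd \<beta>))"

definition L_c :: coeff where
  "L_c \<beta> = (if fst \<beta> = 0 then 0 else (weight2 (fst \<beta> - 1, snd \<beta>))\<^sup>2)"

definition R_a :: coeff where
  "R_a \<beta> = (if fst \<beta> = 0 \<or> snd \<beta> = 0 then 0 else (weight1 (fst \<beta> - 1, snd \<beta> - 1))\<^sup>2)"

definition R_b :: coeff where
  "R_b \<beta> = (if fst \<beta> = 0 \<or> snd \<beta> = 0 then 0
    else weight1 (fst \<beta> - 1, snd \<beta> - 1) * weight2 (fst \<beta> - 1, snd \<beta> - 1))"

definition R_c :: coeff where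
  "R_c \<beta> = (if fst \<beta> = 0 \<or> snd \<beta> = 0 then 0 else (weight2 (fst \<beta> - 1, snd \<beta> - 1))\<^sup>2)"

lemma L_op_DA_eq_block_op:
  assumes "u \<in> H2"
  shows "L_op DA1 DA2 u = block_op L_a L_b L_c u"
proof -
  obtain x y where u: "u = (x, y)" by fastforce
  have "x \<in> l2" "y \<in> l2" using assms u by (auto simp: H2_iff)
  then have "L_op DA1 DA2 u =
      (\<lambda>k. DA1_adj (DA1 x) k + DA2_adj (DA1 y) k, \<lambda>k. DA1_adj (DA2 x) k + DA2_adj (DA2 y) k)"
    by (simp add: u L_op_def op_matrix_def adj_DA1 adj_DA2 DA_l2)
  also have "\<dots> = block_op L_a L_b L_c u"
  proof -
    have "DA1_adj (DA1 x) (i, j) + DA2_adj (DA1 y) (i, j) = fst (block_op L_a L_b L_c u) (i, j)"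
      and "DA1_adj (DA2 x) (i, j) + DA2_adj (DA2 y) (i, j) = snd (block_op L_a L_b L_c u) (i, j)"
      for i j
      by (cases i; cases j;
          simp add: u block_op_def DA1_adj_def DA2_adj_def DA1_eq DA2_eq shift1_def shift2_def
          L_a_def L_b_def L_c_def power2_eq_square)+
    then show ?thesis by (simp add: prod_eq_iff fun_eq_iff)
  qed
  finally show ?thesis .
qed

lemma R_op_DA_eq_block_op:
  assumes "u \<in> H2"
  shows "R_op DA1 DA2 u = block_op R_a R_b R_c u"
proof -
  obtain x y where u: "u = (x, y)" by fastforce
  have "x \<in> l2" "y \<in> l2" using assms u by (auto simp: H2_iff)
  then have "R_op DA1 DA2 u =
      (\<lambda>k. DA1 (DA1_adj x) k + DA1 (DA2_adj y) k, \<lambda>k. DA2 (DA1_adj x) k + DA2 (DA2_adj y) k)"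
    by (simp add: u R_op_def op_matrix_def adj_DA1 adj_DA2)
  also have "\<dots> = block_op R_a R_b R_c u"
  proof -
    have "DA1 (DA1_adj x) (i, j) + DA1 (DA2_adj y) (i, j) = fst (block_op R_a R_b R_c u) (i, j)"
      and "DA2 (DA1_adj x) (i, j) + DA2 (DA2_adj y) (i, j) = snd (block_op R_a R_b R_c u) (i, j)"
      for i j
      by (cases i; cases j;
          simp add: u block_op_def DA1_adj_def DA2_adj_def DA1_eq DA2_eq shift1_def shift2_def
          R_a_def R_b_def R_c_def power2_eq_square)+
    then show ?thesis by (simp add: prod_eq_iff fun_eq_iff)
  qed
  finally show ?thesis .
qed

lemma L_coeffs: "vanishes_on_axes L_b" "bounded_coeffs 1 L_a L_b L_c"
  and R_coeffs: "vanishes_on_axes R_b" "bounded_coeffs 1 R_a R_b R_c" "psd_coeffs R_a R_b R_c"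
  using weight_bounds
  by (auto simp: vanishes_on_axes_def bounded_coeffs_def psd_coeffs_def L_a_def L_b_def L_c_def
      R_a_def R_b_def R_c_def abs_mult power_le_one mult_le_one power_mult_distrib)

lemma psd_L_coeffs: "psd_coeffs L_a L_b L_c"
  unfolding psd_coeffs_def
proof (intro allI conjI)
  fix \<beta> :: "nat \<times> nat"
  show "0 \<le> L_a \<beta>" "0 \<le> L_c \<beta>" by (simp_all add: L_a_def L_c_def)
  show "(L_b \<beta>)\<^sup>2 \<le> L_a \<beta> * L_c \<beta>"
  proof (cases "fst \<beta> = 0 \<or> snd \<beta> = 0")
    case True
    then show ?thesis by (simp add: L_a_def L_b_def L_c_def)
  next
    case False
    then obtain i j where \<beta>: "\<beta> = (Suc i, Suc j)"
      by (metis not0_implies_Suc prod.collapse)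
    have "(weight2 (Suc i, j))\<^sup>2 \<le> (weight2 (i, Suc j))\<^sup>2"
      "(weight1 (i, Suc j))\<^sup>2 \<le> (weight1 (Suc i, j))\<^sup>2"
      unfolding weight_sq by (simp_all add: divide_right_mono)
    then have "(weight2 (Suc i, j))\<^sup>2 * (weight1 (i, Suc j))\<^sup>2
        \<le> (weight2 (i, Suc j))\<^sup>2 * (weight1 (Suc i, j))\<^sup>2"
      by (intro mult_mono) auto
    then show ?thesis by (simp add: \<beta> L_a_def L_b_def L_c_def power_mult_distrib mult.commute)
  qed
qed

lemma op_sqrt_L_DA: "op_sqrt (L_op DA1 DA2) = block_sqrt L_a L_b L_c"
  using op_sqrt_block_op[OF L_coeffs(1) psd_L_coeffs L_coeffs(2)] L_op_DA_eq_block_op by blast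

lemma op_sqrt_R_DA: "op_sqrt (R_op DA1 DA2) = block_sqrt R_a R_b R_c"
  using op_sqrt_block_op[OF R_coeffs(1,3,2)] R_op_DA_eq_block_op by blast

lemma root_sum:
  "root_a a b c \<beta> + 2 * root_b a b c \<beta> + root_c a b c \<beta>
    = (a \<beta> + c \<beta> + 2 * b \<beta> + 2 * sqrt_det (a \<beta>) (b \<beta>) (c \<beta>)) / sqrt_trace (a \<beta>) (b \<beta>) (c \<beta>)"
  by (simp add: root_a_def root_b_def root_c_def add_divide_distrib)

lemma L_block_1_1: "L_a (1, 1) = 1" "L_b (1, 1) = 1 / 2" "L_c (1, 1) = 1"
proof -
  show "L_a (1, 1) = 1" "L_c (1, 1) = 1" by (simp_all add: L_a_def L_c_def weight_sq)
  have "L_b (1, 1) = sqrt (1 / 2) * sqrt (1 / 2)" by (simp add: L_b_def weight1_def weight2_def)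
  then show "L_b (1, 1) = 1 / 2" by simp
qed

lemma R_block_1_1: "R_a (1, 1) = 1" "R_b (1, 1) = 1" "R_c (1, 1) = 1"
  by (simp_all add: R_a_def R_b_def R_c_def weight1_def weight2_def)

lemma L_root_sum_1_1:
  "root_a L_a L_b L_c (1, 1) + 2 * root_b L_a L_b L_c (1, 1) + root_c L_a L_b L_c (1, 1) = sqrt 6"
proof -
  define s :: real where "s = sqrt (3 / 4)"
  have s: "0 \<le> s" "s\<^sup>2 = 3 / 4" by (simp_all add: s_def)
  then have "(3 + 2 * s)\<^sup>2 / (2 + 2 * s) = 6"
    by (simp add: power2_eq_square field_simps)
  then have "(3 + 2 * s) / sqrt (2 + 2 * s) = sqrt 6"
    using s(1)
    by (metis real_sqrt_divide real_sqrt_unique add_nonneg_nonneg zero_le_numeral mult_nonneg_nonneg)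
  then show ?thesis
    unfolding root_sum L_block_1_1 sqrt_det_def sqrt_trace_def by (simp add: s_def power2_eq_square)
qed

lemma R_root_sum_1_1:
  "root_a R_a R_b R_c (1, 1) + 2 * root_b R_a R_b R_c (1, 1) + root_c R_a R_b R_c (1, 1) = sqrt 8"
proof -
  have "sqrt 8 = 4 / sqrt (2 :: real)"
    by (simp add: real_sqrt_mult[of 4 2, simplified] field_simps)
  then show ?thesis
    unfolding root_sum R_block_1_1 sqrt_det_def sqrt_trace_def by simp
qed

theorem theorem3p18:
  shows "\<not> semi_hyponormal DA1 DA2"
proof
  define u where "u = (unit_vec (1, 0), unit_vec (0, 1))"
  have u: "u \<in> H2" by (simp add: u_def H2_iff unit_vec_l2)
  have test: "H2_inner (block_op a b c u) u = of_real (a (1, 1) + 2 * b (1, 1) + c (1, 1))"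
    for a b c
    unfolding u_def using H2_inner_block_op_test_vector[of a b c 0 0] by (simp only: One_nat_def)
  have "H2_inner (diff2 (block_sqrt L_a L_b L_c) (block_sqrt R_a R_b R_c) u) u
      = H2_inner (block_sqrt L_a L_b L_c u) u - H2_inner (block_sqrt R_a R_b R_c u) u"
    by (simp add: u_def diff2_def)
  also have "\<dots> = of_real (sqrt 6 - sqrt 8)"
    unfolding block_sqrt_def if_P[OF u] test L_root_sum_1_1 R_root_sum_1_1 by simp
  finally have "Re (H2_inner (diff2 (block_sqrt L_a L_b L_c) (block_sqrt R_a R_b R_c) u) u) < 0"
    by simp
  moreover assume "semi_hyponormal DA1 DA2"
  then have "pos_op2 (diff2 (block_sqrt L_a L_b L_c) (block_sqrt R_a R_b R_c))"
    by (simp add: semi_hyponormal_def op_sqrt_L_DA op_sqrt_R_DA)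
  ultimately show False
    using u by (auto simp: pos_op2_def)
qed

end
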